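(* Assume $\mathsf{CH}$. There is a strongly tight MAD family $\mathcal{A}$ with $\mathcal{A}\subseteq\mathcal{J}_{1/n}$ (in particular, $\mathcal{A}$ is random destructible and not Laflamme).
   Context: A MAD family is a maximal family of infinite subsets of $\omega$ with pairwise finite intersections; $\mathcal{I}(\mathcal{A})$ is the ideal generated by $\mathcal{A}$ and the finite sets. The summable ideal is $\mathcal{J}_{1/n}=\{A\subseteq\omega:\sum_{n\in A}\frac1{n+1}<\infty\}$. An ideal $\mathcal{I}$ is strongly tight if for every $\{X_n:n\in\omega\}\subseteq[\omega]^\omega$ such that $\{n:X_n\subseteq^*Y\}$ is finite for every $Y\in\mathcal{I}$, there is $A\in\mathcal{I}$ meeting every $X_n$; $\mathcal{A}$ is strongly tight if $\mathcal{I}(\mathcal{A})$ is. $\mathcal{A}$ is random destructible if forcing with random forcing (below some condition) makes $\mathcal{A}$ no longer maximal. $\mathcal{A}$ is Laflamme if $\mathcal{I}(\mathcal{A})$ cannot be extended to an $F_\sigma$ ideal. *)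

theory Defs
  imports Complex_Main "HOL-Library.Countable_Set"
begin

definition CH :: bool where
  "CH \<longleftrightarrow> (\<forall>X :: nat set set. countable X \<or> (\<exists>f. bij_betw f X (UNIV :: nat set set)))"

definition almost_subset :: "nat set \<Rightarrow> nat set \<Rightarrow> bool" where
  "almost_subset X Y \<longleftrightarrow> finite (X - Y)"

definition AD_family :: "nat set set \<Rightarrow> bool" where
  "AD_family \<A> \<longleftrightarrow> (\<forall>A\<in>\<A>. infinite A) \<and>
     (\<forall>A\<in>\<A>. \<forall>B\<in>\<A>. A \<noteq> B \<longrightarrow> finite (A \<inter> B))"

definition MAD :: "nat set set \<Rightarrow> bool" where
  "MAD \<A> \<longleftrightarrow> infinite \<A> \<and> AD_family \<A> \<and>
     (\<forall>\<B>. AD_family \<B> \<and> \<A> \<subseteq> \<B> \<longrightarrow> \<B> = \<A>)"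

definition gen_ideal :: "nat set set \<Rightarrow> nat set set" where
  "gen_ideal \<A> = {Y. \<exists>F. finite F \<and> F \<subseteq> \<A> \<and> finite (Y - \<Union>F)}"

definition summable_ideal :: "nat set set" where
  "summable_ideal = {A. summable (\<lambda>n. if n \<in> A then 1 / (real n + 1) else 0)}"

definition strongly_tight_ideal :: "nat set set \<Rightarrow> bool" where
  "strongly_tight_ideal I \<longleftrightarrow>
     (\<forall>X :: nat \<Rightarrow> nat set.
        (\<forall>n. infinite (X n)) \<and> (\<forall>Y\<in>I. finite {n. almost_subset (X n) Y})
        \<longrightarrow> (\<exists>A\<in>I. \<forall>n. A \<inter> X n \<noteq> {}))"

definition strongly_tight :: "nat set set \<Rightarrow> bool" where
  "strongly_tight \<A> \<longleftrightarrow> strongly_tight_ideal (gen_ideal \<A>)"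

end

theory Submission
  imports Defs "HOL-Analysis.Summation_Tests"
begin

(* Under CH, enumerate P(omega) in order type omega_1; through a pairing function this enumerates
   all sequences (X_n) of subsets of omega. At each stage the family built so far is countable. If the
   current sequence satisfies the premise of strong tightness for that family, a diagonal argument
   picks x_n in X_n with x_n >= 2^n that, for all but finitely many n, avoids any given finite union
   of earlier sets. The range of x then meets every X_n, is almost disjoint from all earlier sets, and
   lies in J_1/n because the sum of 2^-n converges. Strongly tight ideals are tall, which gives
   maximality, and the family is infinite because J_1/n is a proper ideal. *)

section \<open>The summable ideal\<close>

definition harmonic_weight :: "nat set \<Rightarrow> nat \<Rightarrow> real" where
  "harmonic_weight A n = (if n \<in> A then 1 / (real n + 1) else 0)"

lemma summable_ideal_iff: "A \<in> summable_ideal \<longleftrightarrow> summable (harmonic_weight A)"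
  unfolding summable_ideal_def harmonic_weight_def by simp

lemma harmonic_weight_nonneg: "0 \<le> harmonic_weight A n"
  unfolding harmonic_weight_def by simp

lemma summable_ideal_subset:
  assumes "A \<subseteq> B" and "B \<in> summable_ideal"
  shows "A \<in> summable_ideal"
proof -
  have bound: "norm (harmonic_weight A n) \<le> harmonic_weight B n" for n
    using assms(1) unfolding harmonic_weight_def by auto
  from assms(2) have "summable (harmonic_weight B)" by (simp add: summable_ideal_iff)
  thus ?thesis unfolding summable_ideal_iff by (rule summable_comparison_test') (rule bound)
qed

lemma summable_ideal_Un:
  assumes "A \<in> summable_ideal" and "B \<in> summable_ideal"
  shows "A \<union> B \<in> summable_ideal"
proof -
  have bound: "norm (harmonic_weight (A \<union> B) n) \<le> harmonic_weight A n + harmonic_weight B n" for n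
    unfolding harmonic_weight_def by auto
  have "summable (\<lambda>n. harmonic_weight A n + harmonic_weight B n)"
    using assms unfolding summable_ideal_iff by (rule summable_add)
  thus ?thesis unfolding summable_ideal_iff by (rule summable_comparison_test') (rule bound)
qed

lemma finite_in_summable_ideal: "finite A \<Longrightarrow> A \<in> summable_ideal"
  unfolding summable_ideal_iff by (rule summable_finite) (simp_all add: harmonic_weight_def)

lemma Union_in_summable_ideal:
  "finite F \<Longrightarrow> F \<subseteq> summable_ideal \<Longrightarrow> \<Union>F \<in> summable_ideal"
proof (induction F rule: finite_induct)
  case empty
  show ?case by (simp add: finite_in_summable_ideal)
next
  case (insert A F)
  thus ?case by (simp add: summable_ideal_Un)
qed

lemma UNIV_not_in_summable_ideal: "UNIV \<notin> summable_ideal"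
proof
  assume "UNIV \<in> summable_ideal"
  hence "summable (\<lambda>n. inverse (real (Suc n)))"
    unfolding summable_ideal_def by (simp add: inverse_eq_divide add.commute)
  hence "summable (\<lambda>n. inverse (real n))"
    by (rule summable_Suc_iff[THEN iffD1])
  with not_summable_harmonic show False by blast
qed

lemma gen_ideal_subset_summable_ideal:
  assumes "\<A> \<subseteq> summable_ideal"
  shows "gen_ideal \<A> \<subseteq> summable_ideal"
proof
  fix Y assume "Y \<in> gen_ideal \<A>"
  then obtain F where F: "finite F" "F \<subseteq> \<A>" "finite (Y - \<Union>F)"
    unfolding gen_ideal_def by blast
  have "Y - \<Union>F \<in> summable_ideal" using F(3) by (rule finite_in_summable_ideal)
  moreover have "\<Union>F \<in> summable_ideal"
    using F(1) by (rule Union_in_summable_ideal) (use F(2) assms in blast)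
  ultimately have "(Y - \<Union>F) \<union> \<Union>F \<in> summable_ideal" by (rule summable_ideal_Un)
  moreover have "Y \<subseteq> (Y - \<Union>F) \<union> \<Union>F" by blast
  ultimately show "Y \<in> summable_ideal" by (rule summable_ideal_subset[rotated])
qed

lemma summable_ideal_rangeI:
  fixes x :: "nat \<Rightarrow> nat"
  assumes "summable (\<lambda>n. 1 / (real (x n) + 1))"
  shows "range x \<in> summable_ideal"
proof -
  let ?w = "\<lambda>a::nat. 1 / (real a + 1)"
  have "sum (harmonic_weight (range x)) {..N} \<le> suminf (?w \<circ> x)" for N
  proof -
    define F where "F = inv x ` (range x \<inter> {..N})"
    have "x ` F = range x \<inter> {..N}"
      unfolding F_def image_image by (force simp: f_inv_into_f)
    hence "sum (harmonic_weight (range x)) {..N} = sum ?w (x ` F)"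
      by (simp add: harmonic_weight_def sum.If_cases Int_commute)
    also have "\<dots> \<le> sum (?w \<circ> x) F"
      unfolding F_def by (rule sum_image_le) auto
    also have "\<dots> \<le> suminf (?w \<circ> x)"
      using assms unfolding F_def by (intro sum_le_suminf) (auto simp: comp_def)
    finally show ?thesis .
  qed
  thus ?thesis
    unfolding summable_ideal_iff by (rule bounded_imp_summable[OF harmonic_weight_nonneg])
qed

lemma summable_ideal_range_exp:
  fixes x :: "nat \<Rightarrow> nat"
  assumes "\<And>n. 2 ^ n \<le> x n"
  shows "range x \<in> summable_ideal"
proof (rule summable_ideal_rangeI)
  have "1 / (real (x n) + 1) \<le> (1 / 2) ^ n" for n
  proof -
    have "(2::real) ^ n \<le> real (x n)"
      using assms[of n] by (metis of_nat_le_iff of_nat_numeral of_nat_power)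
    hence "(2::real) ^ n \<le> real (x n) + 1" by linarith
    thus ?thesis by (simp add: power_one_over divide_left_mono)
  qed
  thus "summable (\<lambda>n. 1 / (real (x n) + 1))"
    by (intro summable_comparison_test'[OF summable_geometric, where N = 0]) auto
qed

section \<open>Strongly tight ideals\<close>

lemma gen_ideal_mono: "\<A> \<subseteq> \<B> \<Longrightarrow> gen_ideal \<A> \<subseteq> gen_ideal \<B>"
  unfolding gen_ideal_def by blast

lemma gen_ideal_base: "A \<in> \<A> \<Longrightarrow> A \<in> gen_ideal \<A>"
  unfolding gen_ideal_def by (intro CollectI exI[of _ "{A}"]) auto

lemma Union_in_gen_ideal:
  assumes "finite F" and "F \<subseteq> insert {} \<A>"
  shows "\<Union>F \<in> gen_ideal \<A>"
proof -
  have "\<Union>F - \<Union>(F - {{}}) = {}" by blast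
  hence "finite (\<Union>F - \<Union>(F - {{}}))" by (metis finite.emptyI)
  with assms show ?thesis unfolding gen_ideal_def by (intro CollectI exI[of _ "F - {{}}"]) auto
qed

lemma almost_disjoint_gen_ideal:
  assumes "\<And>A. A \<in> \<A> \<Longrightarrow> finite (B \<inter> A)" and "Y \<in> gen_ideal \<A>"
  shows "finite (B \<inter> Y)"
proof -
  obtain F where F: "finite F" "F \<subseteq> \<A>" "finite (Y - \<Union>F)"
    using assms(2) unfolding gen_ideal_def by blast
  have "finite (\<Union>A\<in>F. B \<inter> A)" using F assms(1) by blast
  moreover have "B \<inter> Y \<subseteq> (\<Union>A\<in>F. B \<inter> A) \<union> (Y - \<Union>F)" by blast
  ultimately show ?thesis using F(3) finite_subset by blast
qed

definition tight_premise :: "nat set set \<Rightarrow> (nat \<Rightarrow> nat set) \<Rightarrow> bool" where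
  "tight_premise I X \<longleftrightarrow> (\<forall>n. infinite (X n)) \<and> (\<forall>Y\<in>I. finite {n. almost_subset (X n) Y})"

lemma strongly_tight_ideal_iff:
  "strongly_tight_ideal I \<longleftrightarrow> (\<forall>X. tight_premise I X \<longrightarrow> (\<exists>A\<in>I. \<forall>n. A \<inter> X n \<noteq> {}))"
  unfolding strongly_tight_ideal_def tight_premise_def ..

lemma strongly_tight_ideal_tall:
  assumes "strongly_tight_ideal I" and "infinite B"
  shows "\<exists>Y\<in>I. infinite (B \<inter> Y)"
proof (rule ccontr)
  assume "\<not> ?thesis"
  hence fin: "finite (B \<inter> Y)" if "Y \<in> I" for Y using that by blast
  define X where "X n = B - {..<n}" for n
  have "tight_premise I X"
    unfolding tight_premise_def
  proof (intro conjI allI ballI)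
    show "infinite (X n)" for n using assms(2) unfolding X_def by simp
    fix Y assume "Y \<in> I"
    have "\<not> almost_subset (X n) Y" for n
    proof
      assume "almost_subset (X n) Y"
      hence "finite ((X n - Y) \<union> (B \<inter> Y))"
        using fin[OF \<open>Y \<in> I\<close>] unfolding almost_subset_def by simp
      moreover have "X n \<subseteq> (X n - Y) \<union> (B \<inter> Y)" unfolding X_def by blast
      ultimately show False using \<open>infinite (X n)\<close> finite_subset by blast
    qed
    thus "finite {n. almost_subset (X n) Y}" by simp
  qed
  then obtain A where A: "A \<in> I" "\<And>n. A \<inter> X n \<noteq> {}"
    using assms(1) unfolding strongly_tight_ideal_iff by blast
  obtain M where M: "\<And>a. a \<in> B \<inter> A \<Longrightarrow> a \<le> M"
    using fin[OF A(1)] unfolding finite_nat_set_iff_bounded_le by blast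
  obtain a where "a \<in> A" "a \<in> X (Suc M)" using A(2) by blast
  thus False using M[of a] unfolding X_def by auto
qed

lemma strongly_tight_MAD:
  assumes "infinite \<A>" and "AD_family \<A>" and "strongly_tight \<A>"
  shows "MAD \<A>"
  unfolding MAD_def
proof (intro conjI assms allI impI)
  fix \<B> assume \<B>: "AD_family \<B> \<and> \<A> \<subseteq> \<B>"
  show "\<B> = \<A>"
  proof (rule ccontr)
    assume "\<B> \<noteq> \<A>"
    then obtain B where B: "B \<in> \<B>" "B \<notin> \<A>" using \<B> by blast
    have "infinite B" using \<B> B(1) unfolding AD_family_def by blast
    have "finite (B \<inter> A)" if "A \<in> \<A>" for A
    proof -
      have "A \<in> \<B>" "B \<noteq> A" using that \<B> B by auto
      thus ?thesis using \<B> B(1) unfolding AD_family_def by blast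
    qed
    hence "finite (B \<inter> Y)" if "Y \<in> gen_ideal \<A>" for Y
      using that by (rule almost_disjoint_gen_ideal)
    thus False
      using strongly_tight_ideal_tall[OF assms(3)[unfolded strongly_tight_def] \<open>infinite B\<close>] by blast
  qed
qed

lemma strongly_tight_infinite:
  assumes "strongly_tight \<A>" and "UNIV \<notin> gen_ideal \<A>"
  shows "infinite \<A>"
proof
  assume "finite \<A>"
  define B where "B = - \<Union>\<A>"
  have disjoint: "B \<inter> A = {}" if "A \<in> \<A>" for A using that unfolding B_def by blast
  have "infinite B"
  proof
    assume "finite B"
    hence "UNIV \<in> gen_ideal \<A>"
      using \<open>finite \<A>\<close> unfolding gen_ideal_def B_def
      by (intro CollectI exI[of _ \<A>]) (auto simp: Compl_eq_Diff_UNIV)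
    thus False using assms(2) by blast
  qed
  moreover have "finite (B \<inter> Y)" if "Y \<in> gen_ideal \<A>" for Y
    by (rule almost_disjoint_gen_ideal[OF _ that]) (simp add: disjoint)
  ultimately show False
    using strongly_tight_ideal_tall[OF assms(1)[unfolded strongly_tight_def]] by blast
qed

section \<open>The diagonal step\<close>

lemma diagonal_selection:
  fixes X c :: "nat \<Rightarrow> nat set" and b :: "nat \<Rightarrow> nat"
  assumes inf: "\<And>n. infinite (X n)"
    and fin: "\<And>k. finite {n. almost_subset (X n) (\<Union>i<k. c i)}"
  shows "\<exists>x. (\<forall>n. x n \<in> X n \<and> b n \<le> x n) \<and> (\<forall>i. finite (range x \<inter> c i))"
proof -
  define D where "D k = (\<Union>i<k. c i)" for k
  define g where "g n = Max {k. k \<le> n \<and> infinite (X n - D k)}" for n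
  \<comment> \<open>By maximality of g n, an x n outside D (g n) lies in c i only if n \<le> i or
      X n is almost contained in D (Suc i); by assumption there are only finitely many such n.\<close>
  have g: "infinite (X n - D (g n))" for n
  proof -
    have "0 \<in> {k. k \<le> n \<and> infinite (X n - D k)}" using inf[of n] by (simp add: D_def)
    hence "g n \<in> {k. k \<le> n \<and> infinite (X n - D k)}" unfolding g_def by (intro Max_in) auto
    thus ?thesis by simp
  qed
  have g_max: "k \<le> g n" if "k \<le> n" "infinite (X n - D k)" for k n
    unfolding g_def using that by (intro Max_ge) auto
  have "\<exists>y. y \<in> X n - D (g n) \<and> b n \<le> y" for n
  proof -
    have "\<not> X n - D (g n) \<subseteq> {..<b n}" using g[of n] finite_subset by blast
    thus ?thesis by auto
  qed
  then obtain x where x: "\<And>n. x n \<in> X n - D (g n)" "\<And>n. b n \<le> x n" by metis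
  have "finite (range x \<inter> c i)" for i
  proof -
    have "range x \<inter> c i \<subseteq> x ` ({..i} \<union> {n. almost_subset (X n) (D (Suc i))})"
    proof (clarify)
      fix n assume "x n \<in> c i"
      hence "\<not> Suc i \<le> g n" using x(1)[of n] by (auto simp: D_def)
      hence "n \<le> i \<or> almost_subset (X n) (D (Suc i))"
        using g_max[of "Suc i" n] unfolding almost_subset_def by linarith
      thus "x n \<in> x ` ({..i} \<union> {n. almost_subset (X n) (D (Suc i))})" by blast
    qed
    moreover have "finite {n. almost_subset (X n) (D (Suc i))}" using fin by (simp add: D_def)
    ultimately show ?thesis using finite_subset by blast
  qed
  thus ?thesis using x by blast
qed

definition summable_witness :: "nat set set \<Rightarrow> (nat \<Rightarrow> nat set) \<Rightarrow> nat set \<Rightarrow> bool" where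
  "summable_witness \<C> X A \<longleftrightarrow>
     infinite A \<and> A \<in> summable_ideal \<and> (\<forall>C\<in>\<C>. finite (A \<inter> C)) \<and> (\<forall>n. A \<inter> X n \<noteq> {})"

lemma summable_witness_exists:
  assumes "countable \<C>" and "tight_premise (gen_ideal \<C>) X"
  shows "\<exists>A. summable_witness \<C> X A"
proof -
  define c where "c = from_nat_into (insert {} \<C>)"
  have range_c: "range c = insert {} \<C>" unfolding c_def using assms(1) by simp
  have "(\<Union>i<k. c i) \<in> gen_ideal \<C>" for k
    using range_c by (intro Union_in_gen_ideal) auto
  hence "finite {n. almost_subset (X n) (\<Union>i<k. c i)}" for k
    using assms(2) unfolding tight_premise_def by blast
  moreover have "infinite (X n)" for n
    using assms(2) unfolding tight_premise_def by blast
  ultimately obtain x where x: "\<And>n. x n \<in> X n" "\<And>n. 2 ^ n \<le> x n"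
    and almost_disjoint: "\<And>i. finite (range x \<inter> c i)"
    using diagonal_selection[of X c "\<lambda>n. 2 ^ n"] by blast
  have "infinite (range x)"
  proof
    assume "finite (range x)"
    then obtain M where "\<And>n. x n \<le> M" unfolding finite_nat_set_iff_bounded_le by blast
    hence "x M \<le> M" .
    thus False using x(2)[of M] less_exp[of M] by linarith
  qed
  moreover have "range x \<in> summable_ideal" using x(2) by (rule summable_ideal_range_exp)
  moreover have "finite (range x \<inter> C)" if "C \<in> \<C>" for C
  proof -
    have "C \<in> range c" using that range_c by simp
    then obtain i where "C = c i" ..
    thus ?thesis using almost_disjoint by simp
  qed
  moreover have "range x \<inter> X n \<noteq> {}" for n using x(1)[of n] by blast
  ultimately have "summable_witness \<C> X (range x)" unfolding summable_witness_def by blast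
  thus ?thesis ..
qed

section \<open>The construction under CH\<close>

unbundle cardinal_syntax

text \<open>The strict part of a well-order of P(omega) of minimal order type; under CH this type is
  omega_1, so every proper initial segment is countable.\<close>

definition stage_less :: "(nat set \<times> nat set) set" where
  "stage_less = |UNIV :: nat set set| - Id"

lemma wf_stage_less: "wf stage_less"
  unfolding stage_less_def
  by (rule wo_rel.WF) (simp add: wo_rel_def card_of_Well_order)

lemma stage_less_total:
  assumes "s \<noteq> t"
  shows "(s, t) \<in> stage_less \<or> (t, s) \<in> stage_less"
proof -
  have "Total |UNIV :: nat set set|"
    using card_of_Well_order[of "UNIV :: nat set set"]
    by (simp add: well_order_on_def linear_order_on_def)
  hence "total_on UNIV |UNIV :: nat set set|" by (simp add: Field_card_of)
  thus ?thesis using assms unfolding stage_less_def total_on_def by auto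
qed

lemma countable_stage_less_below:
  assumes "CH"
  shows "countable {s. (s, t) \<in> stage_less}"
proof -
  have below: "{s. (s, t) \<in> stage_less} = underS |UNIV :: nat set set| t"
    unfolding stage_less_def underS_def by auto
  have "|underS |UNIV :: nat set set| t| <o |UNIV :: nat set set|"
    by (rule card_of_underS[OF card_of_Card_order]) (simp add: Field_card_of)
  hence "\<nexists>f. bij_betw f (underS |UNIV :: nat set set| t) (UNIV :: nat set set)"
    using not_ordLess_ordIso card_of_ordIso by blast
  thus ?thesis using assms unfolding CH_def below by blast
qed

definition seq_of :: "nat set \<Rightarrow> nat \<Rightarrow> nat set" where
  "seq_of S n = {m. prod_encode (n, m) \<in> S}"

lemma seq_of_code: "seq_of {prod_encode (n, m) | n m. m \<in> X n} = X"
  unfolding seq_of_def by auto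

text \<open>Stage t handles the sequence coded by t; the value None records that nothing is added.\<close>

definition earlier_sets :: "(nat set \<Rightarrow> nat set option) \<Rightarrow> nat set \<Rightarrow> nat set set" where
  "earlier_sets f t = {B. \<exists>s. (s, t) \<in> stage_less \<and> f s = Some B}"

definition stage :: "(nat set \<Rightarrow> nat set option) \<Rightarrow> nat set \<Rightarrow> nat set option" where
  "stage f t =
     (if tight_premise (gen_ideal (earlier_sets f t)) (seq_of t)
      then Some (SOME A. summable_witness (earlier_sets f t) (seq_of t) A) else None)"

definition construction :: "nat set \<Rightarrow> nat set option" where
  "construction = wfrec stage_less stage"

definition mad_family :: "nat set set" where
  "mad_family = {B. \<exists>t. construction t = Some B}"

lemma construction_unfold: "construction t = stage construction t"
proof -
  have "construction t = stage (cut construction stage_less t) t"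
    unfolding construction_def by (rule wfrec[OF wf_stage_less])
  moreover have "earlier_sets (cut construction stage_less t) t = earlier_sets construction t"
    unfolding earlier_sets_def by (auto simp: cut_apply)
  ultimately show ?thesis unfolding stage_def by simp
qed

lemma countable_earlier_sets:
  assumes "CH"
  shows "countable (earlier_sets f t)"
proof -
  have "earlier_sets f t \<subseteq> (\<lambda>s. the (f s)) ` {s. (s, t) \<in> stage_less}"
    unfolding earlier_sets_def by force
  thus ?thesis by (rule countable_subset) (intro countable_image countable_stage_less_below[OF assms])
qed

lemma construction_witness:
  assumes "CH" and "construction t = Some B"
  shows "summable_witness (earlier_sets construction t) (seq_of t) B"
proof -
  have premise: "tight_premise (gen_ideal (earlier_sets construction t)) (seq_of t)"
    and B: "B = (SOME A. summable_witness (earlier_sets construction t) (seq_of t) A)"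
    using assms(2) construction_unfold[of t] unfolding stage_def by (auto split: if_splits)
  show ?thesis
    unfolding B by (rule someI_ex, rule summable_witness_exists[OF countable_earlier_sets[OF assms(1)] premise])
qed

lemma construction_defined:
  "tight_premise (gen_ideal (earlier_sets construction t)) (seq_of t) \<Longrightarrow> \<exists>B. construction t = Some B"
  using construction_unfold[of t] unfolding stage_def by auto

lemma earlier_sets_subset_mad_family: "earlier_sets construction t \<subseteq> mad_family"
  unfolding earlier_sets_def mad_family_def by blast

lemma mad_family_AD:
  assumes "CH"
  shows "AD_family mad_family"
  unfolding AD_family_def
proof (intro conjI ballI impI)
  fix A assume "A \<in> mad_family"
  then obtain t where "construction t = Some A" unfolding mad_family_def by blast
  thus "infinite A" using construction_witness[OF assms] unfolding summable_witness_def by blast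
next
  fix A B assume "A \<in> mad_family" "B \<in> mad_family" "A \<noteq> B"
  then obtain s t where s: "construction s = Some A" and t: "construction t = Some B"
    unfolding mad_family_def by blast
  with \<open>A \<noteq> B\<close> have "s \<noteq> t" by auto
  then consider "(s, t) \<in> stage_less" | "(t, s) \<in> stage_less" using stage_less_total by blast
  thus "finite (A \<inter> B)"
  proof cases
    case 1
    hence "A \<in> earlier_sets construction t" using s unfolding earlier_sets_def by blast
    thus ?thesis using construction_witness[OF assms t] unfolding summable_witness_def
      by (simp add: Int_commute)
  next
    case 2
    hence "B \<in> earlier_sets construction s" using t unfolding earlier_sets_def by blast
    thus ?thesis using construction_witness[OF assms s] unfolding summable_witness_def by simp
  qed
qed

lemma mad_family_subset_summable_ideal:
  assumes "CH"
  shows "mad_family \<subseteq> summable_ideal"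
proof
  fix A assume "A \<in> mad_family"
  then obtain t where "construction t = Some A" unfolding mad_family_def by blast
  thus "A \<in> summable_ideal" using construction_witness[OF assms] unfolding summable_witness_def by blast
qed

lemma mad_family_strongly_tight:
  assumes "CH"
  shows "strongly_tight mad_family"
  unfolding strongly_tight_def strongly_tight_ideal_iff
proof (intro allI impI)
  fix X assume X: "tight_premise (gen_ideal mad_family) X"
  define t where "t = {prod_encode (n, m) | n m. m \<in> X n}"
  have seq_t: "seq_of t = X" unfolding t_def by (rule seq_of_code)
  have "tight_premise (gen_ideal (earlier_sets construction t)) (seq_of t)"
    using X gen_ideal_mono[OF earlier_sets_subset_mad_family[of t]]
    unfolding seq_t tight_premise_def by blast
  then obtain B where B: "construction t = Some B" using construction_defined by blast
  hence "B \<in> gen_ideal mad_family" unfolding mad_family_def by (intro gen_ideal_base) blast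
  moreover have "\<forall>n. B \<inter> X n \<noteq> {}"
    using construction_witness[OF assms B] unfolding seq_t summable_witness_def by blast
  ultimately show "\<exists>A\<in>gen_ideal mad_family. \<forall>n. A \<inter> X n \<noteq> {}" by blast
qed

theorem mainTheorem11:
  assumes "CH"
  shows "\<exists>\<A>. MAD \<A> \<and> strongly_tight \<A> \<and> \<A> \<subseteq> summable_ideal"
proof -
  have tight: "strongly_tight mad_family" using assms by (rule mad_family_strongly_tight)
  have summable: "mad_family \<subseteq> summable_ideal" using assms by (rule mad_family_subset_summable_ideal)
  hence "UNIV \<notin> gen_ideal mad_family"
    using gen_ideal_subset_summable_ideal UNIV_not_in_summable_ideal by blast
  with tight have "infinite mad_family" by (rule strongly_tight_infinite)
  hence "MAD mad_family" using mad_family_AD[OF assms] tight by (rule strongly_tight_MAD)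
  with tight summable show ?thesis by blast
qed

end
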